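(* Let $W:\mathbb R\to SO(4)$ be a symmetric loop which is null-homotopic as a loop in $SO(4)$ (so every lift is $2\pi$-periodic), and suppose some (equivalently every) continuous lift $\tilde W$ of $W$ satisfies $T(\tilde W(0))=\tilde W(0)$. Choose the lift $\tilde W$ with $\tilde W(0)\in X_0$. Then $\tilde W(\pi)\in X_0\sqcup Y_0$, and $W$ is symmetrically homotopic to the constant loop $k\mapsto I_4$ if and only if $\tilde W(\pi)\in X_0$; if $\tilde W(\pi)\in Y_0$, $W$ is not symmetrically homotopic to the constant loop $I_4$.
   Context: Identify $\mathbb H$ with $\mathbb R^4$ via $x_0+x_1i+x_2j+x_3k\leftrightarrow(x_0,x_1,x_2,x_3)^T$; $Sp(1)$ is the group of unit quaternions, with componentwise product and conjugation on $Sp(1)\times Sp(1)$. Let $p:Sp(1)\times Sp(1)\to SO(4)$ send $(g,h)$ to the matrix of the $\mathbb R$-linear map $x\mapsto g^{-1}xh$ (a two-to-one covering map). Let $w=\begin{pmatrix}0&-I_2\\ I_2&0\end{pmatrix}$ and $\tilde w=(1,j)$, and $T(u,v)=\overline{\tilde w^{-1}(u,v)\tilde w}=(\bar u,\ j^{-1}\bar v j)$. Let $X_0=\{(1,a+bi+dk):a^2+b^2+d^2=1\}$, $Y_0=-X_0$. A symmetric loop is a continuous $2\pi$-periodic map $W:\mathbb R\to SO(4)$ with $wW(k)w^{-1}=W(-k)^{-1}$ for all $k$. A symmetric homotopy is a continuous $H:\mathbb R\times[0,1]\to SO(4)$ such that $H(\cdot,t)$ is a symmetric loop for every $t$; two symmetric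 loops are symmetrically homotopic if they are $H(\cdot,0)$ and $H(\cdot,1)$ for some symmetric homotopy. A lift of $W$ is a continuous $\tilde W:\mathbb R\to Sp(1)\times Sp(1)$ with $p\circ\tilde W=W$. (Physically $W$ is the Wilson loop $W_{\mathbf e_2,\pi}(k_x)$ of a four-occupied-band, time-reversal and $C_2$-symmetric insulator with vanishing Fu–Kane–Mele invariant and vanishing partial polarization $\nu_{\Gamma Y}$; "trivial" means symmetrically homotopic to the constant loop.) *)

theory Defs
  imports "HOL-Analysis.Analysis"
begin

text \<open>Quaternions are identified with real^4: x0 + x1 i + x2 j + x3 k corresponds to
  the vector with components x $ 1 = x0, x $ 2 = x1, x $ 3 = x2, x $ 4 = x3
  (the indices 1,2,3,4 of the type 4 are pairwise distinct).\<close>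

definition quat :: "real \<Rightarrow> real \<Rightarrow> real \<Rightarrow> real \<Rightarrow> real^4" where
  "quat a b c d = (\<chi> n. if n = 1 then a else if n = 2 then b else if n = 3 then c else d)"

definition qmult :: "real^4 \<Rightarrow> real^4 \<Rightarrow> real^4" where
  "qmult x y = quat
     (x$1 * y$1 - x$2 * y$2 - x$3 * y$3 - x$4 * y$4)
     (x$1 * y$2 + x$2 * y$1 + x$3 * y$4 - x$4 * y$3)
     (x$1 * y$3 - x$2 * y$4 + x$3 * y$1 + x$4 * y$2)
     (x$1 * y$4 + x$2 * y$3 - x$3 * y$2 + x$4 * y$1)"

definition qconj :: "real^4 \<Rightarrow> real^4" where
  "qconj x = quat (x$1) (- x$2) (- x$3) (- x$4)"

definition qinv :: "real^4 \<Rightarrow> real^4" where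
  "qinv x = (1 / (norm x)\<^sup>2) *\<^sub>R qconj x"

definition qj :: "real^4" where "qj = quat 0 0 1 0"

definition Sp1 :: "(real^4) set" where "Sp1 = {x. norm x = 1}"

definition Sp1xSp1 :: "((real^4) \<times> (real^4)) set" where "Sp1xSp1 = Sp1 \<times> Sp1"

definition SO4 :: "(real^4^4) set" where
  "SO4 = {A. orthogonal_matrix A \<and> det A = 1}"

definition pcov :: "(real^4) \<times> (real^4) \<Rightarrow> real^4^4" where
  "pcov gh = matrix (\<lambda>x. qmult (qmult (qinv (fst gh)) x) (snd gh))"

text \<open>w = [[0, -I2], [I2, 0]] in the coordinates (x0,x1,x2,x3).\<close>
definition wmat :: "real^4^4" where
  "wmat = (\<chi> r c. if r = 3 \<and> c = 1 then 1 else if r = 4 \<and> c = 2 then 1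
                  else if r = 1 \<and> c = 3 then -1 else if r = 2 \<and> c = 4 then -1 else 0)"

definition Tmap :: "(real^4) \<times> (real^4) \<Rightarrow> (real^4) \<times> (real^4)" where
  "Tmap uv = (qconj (fst uv), qmult (qinv qj) (qmult (qconj (snd uv)) qj))"

definition X0 :: "((real^4) \<times> (real^4)) set" where
  "X0 = {(quat 1 0 0 0, quat a b 0 d) | a b d. a\<^sup>2 + b\<^sup>2 + d\<^sup>2 = 1}"

definition Y0 :: "((real^4) \<times> (real^4)) set" where
  "Y0 = (\<lambda>(u, v). (- u, - v)) ` X0"

definition symmetric_loop :: "(real \<Rightarrow> real^4^4) \<Rightarrow> bool" where
  "symmetric_loop W \<longleftrightarrow> continuous_on UNIV W \<and> (\<forall>k. W k \<in> SO4)
     \<and> (\<forall>k. W (k + 2 * pi) = W k)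
     \<and> (\<forall>k. wmat ** W k ** matrix_inv wmat = matrix_inv (W (- k)))"

definition symmetric_homotopy :: "(real \<times> real \<Rightarrow> real^4^4) \<Rightarrow> bool" where
  "symmetric_homotopy H \<longleftrightarrow> continuous_on (UNIV \<times> {0..1}) H
     \<and> (\<forall>t\<in>{0..1}. symmetric_loop (\<lambda>k. H (k, t)))"

definition symmetrically_homotopic :: "(real \<Rightarrow> real^4^4) \<Rightarrow> (real \<Rightarrow> real^4^4) \<Rightarrow> bool" where
  "symmetrically_homotopic W V \<longleftrightarrow> (\<exists>H. symmetric_homotopy H
     \<and> (\<forall>k. H (k, 0) = W k) \<and> (\<forall>k. H (k, 1) = V k))"

definition is_lift :: "(real \<Rightarrow> (real^4) \<times> (real^4)) \<Rightarrow> (real \<Rightarrow> real^4^4) \<Rightarrow> bool" where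
  "is_lift L W \<longleftrightarrow> continuous_on UNIV L \<and> (\<forall>k. L k \<in> Sp1xSp1 \<and> pcov (L k) = W k)"

definition nullhomotopic_SO4 :: "(real \<Rightarrow> real^4^4) \<Rightarrow> bool" where
  "nullhomotopic_SO4 W \<longleftrightarrow>
     (\<exists>a\<in>SO4. homotopic_loops SO4 (\<lambda>t. W (2 * pi * t)) (linepath a a))"

end

theory Submission
  imports Defs "HOL-Library.Periodic_Fun"
begin

text \<open>The map \<open>p\<close> is a two-sheeted covering of \<open>SO(4)\<close> with deck transformation \<open>a \<mapsto> -a\<close>,
  and \<open>w = p(1, j)\<close>, so conjugation by \<open>w\<close> lifts to \<open>T\<close> followed by inversion. Hence a lift \<open>L\<close>
  of a symmetric loop with \<open>T (L 0) = L 0\<close> satisfies \<open>L (-k) = T (L k)\<close>; being also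
  \<open>2\<pi>\<close>-periodic (the loop is null-homotopic), it is \<open>T\<close>-fixed at \<open>0\<close> and at \<open>\<pi>\<close>. The fixed
  points of \<open>T\<close> form \<open>X\<^sub>0 \<union> Y\<^sub>0\<close>, told apart by the sign of the first component.

  A symmetric loop is the \<open>T\<close>-symmetric extension of its lift on \<open>[0, \<pi>]\<close>. If that path ends
  in \<open>X\<^sub>0\<close>, simple connectivity of \<open>S\<^sup>3 \<times> S\<^sup>3\<close> and path-connectivity of
  \<open>X\<^sub>0 \<cong> S\<^sup>2\<close> deform it, through paths with \<open>T\<close>-fixed endpoints, to the constant path at
  \<open>(1, 1)\<close>, and extending the deformation symmetrically gives a symmetric homotopy to \<open>I\<close>.
  Conversely, along a lifted symmetric homotopy to \<open>I\<close> the first components of the lift at \<open>0\<close>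
  and \<open>\<pi>\<close> stay in \<open>{\<plusminus>1}\<close>, hence are constant, and they agree for the constant loop.\<close>

section \<open>Quaternions as vectors in \<open>\<real>\<^sup>4\<close>\<close>

lemma quat_component [simp]:
  "quat a b c d $ 1 = a" "quat a b c d $ 2 = b" "quat a b c d $ 3 = c" "quat a b c d $ 4 = d"
  by (simp_all add: quat_def)

lemma vec4_eq_iff: "x = y \<longleftrightarrow> x$1 = y$1 \<and> x$2 = y$2 \<and> x$3 = y$3 \<and> (x::real^4)$4 = y$4"
  by (auto simp: vec_eq_iff forall_4)

lemma inner_vec4: "x \<bullet> (y::real^4) = x$1 * y$1 + x$2 * y$2 + x$3 * y$3 + x$4 * y$4"
  by (simp add: inner_vec_def sum_4)

lemma power2_norm_vec4: "(norm (x::real^4))\<^sup>2 = (x$1)\<^sup>2 + (x$2)\<^sup>2 + (x$3)\<^sup>2 + (x$4)\<^sup>2"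
  by (simp add: power2_norm_eq_inner inner_vec4 flip: power2_eq_square)

lemma norm_vec4_eq_1_iff: "norm (x::real^4) = 1 \<longleftrightarrow> (x$1)\<^sup>2 + (x$2)\<^sup>2 + (x$3)\<^sup>2 + (x$4)\<^sup>2 = 1"
  by (metis power2_norm_vec4 norm_ge_zero power2_eq_iff_nonneg zero_le_one power_one)

definition qone :: "real^4" where "qone = quat 1 0 0 0"
definition qi :: "real^4" where "qi = quat 0 1 0 0"
definition qk :: "real^4" where "qk = quat 0 0 0 1"

lemma qone_component [simp]: "qone$1 = 1" "qone$2 = 0" "qone$3 = 0" "qone$4 = 0"
  and qi_component [simp]: "qi$1 = 0" "qi$2 = 1" "qi$3 = 0" "qi$4 = 0"
  and qj_component [simp]: "qj$1 = 0" "qj$2 = 0" "qj$3 = 1" "qj$4 = 0"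
  and qk_component [simp]: "qk$1 = 0" "qk$2 = 0" "qk$3 = 0" "qk$4 = 1"
  by (simp_all add: qone_def qi_def qj_def qk_def)

lemma norm_qone [simp]: "norm qone = 1" and norm_qi [simp]: "norm qi = 1"
  and norm_qj [simp]: "norm qj = 1" and norm_qk [simp]: "norm qk = 1"
  by (simp_all add: norm_vec4_eq_1_iff)

lemma axis_vec4: "axis 1 1 = qone" "axis 2 1 = qi" "axis 3 1 = qj" "axis 4 1 = (qk::real^4)"
  by (simp_all add: vec4_eq_iff axis_def)

lemma qmult_component [simp]:
  "qmult x y $ 1 = x$1 * y$1 - x$2 * y$2 - x$3 * y$3 - x$4 * y$4"
  "qmult x y $ 2 = x$1 * y$2 + x$2 * y$1 + x$3 * y$4 - x$4 * y$3"
  "qmult x y $ 3 = x$1 * y$3 - x$2 * y$4 + x$3 * y$1 + x$4 * y$2"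
  "qmult x y $ 4 = x$1 * y$4 + x$2 * y$3 - x$3 * y$2 + x$4 * y$1"
  by (simp_all add: qmult_def)

lemma qconj_component [simp]:
  "qconj x $ 1 = x$1" "qconj x $ 2 = - x$2" "qconj x $ 3 = - x$3" "qconj x $ 4 = - x$4"
  by (simp_all add: qconj_def)

lemma qmult_assoc: "qmult (qmult x y) z = qmult x (qmult y z)"
  by (simp add: vec4_eq_iff algebra_simps)

lemma qmult_qone [simp]: "qmult qone x = x" "qmult x qone = x"
  by (simp_all add: vec4_eq_iff)

lemma qmult_distrib:
  "qmult (x + y) z = qmult x z + qmult y z" "qmult z (x + y) = qmult z x + qmult z y"
  "qmult (x - y) z = qmult x z - qmult y z" "qmult z (x - y) = qmult z x - qmult z y"
  by (simp_all add: vec4_eq_iff algebra_simps)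

lemma qmult_scaleR [simp]: "qmult (c *\<^sub>R x) z = c *\<^sub>R qmult x z" "qmult z (c *\<^sub>R x) = c *\<^sub>R qmult z x"
  and qmult_minus [simp]: "qmult (- x) z = - qmult x z" "qmult z (- x) = - qmult z x"
  by (simp_all add: vec4_eq_iff algebra_simps)

lemma qconj_qconj [simp]: "qconj (qconj x) = x"
  and qconj_minus [simp]: "qconj (- x) = - qconj x"
  and qconj_scaleR [simp]: "qconj (c *\<^sub>R x) = c *\<^sub>R qconj x"
  and qconj_qone [simp]: "qconj qone = qone"
  by (simp_all add: vec4_eq_iff)

lemma qconj_qmult: "qconj (qmult x y) = qmult (qconj y) (qconj x)"
  by (simp add: vec4_eq_iff algebra_simps)

lemma norm_qconj [simp]: "norm (qconj x) = norm x"
  by (simp add: norm_eq_sqrt_inner inner_vec4)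

lemma norm_qmult: "norm (qmult x y) = norm x * norm y"
proof -
  have "(norm (qmult x y))\<^sup>2 = (norm x * norm y)\<^sup>2"
    unfolding power2_norm_vec4 power_mult_distrib by (simp add: power2_eq_square algebra_simps)
  then show ?thesis by (simp add: power2_eq_iff_nonneg)
qed

lemma qmult_qconj: "qmult x (qconj x) = (norm x)\<^sup>2 *\<^sub>R qone" "qmult (qconj x) x = (norm x)\<^sup>2 *\<^sub>R qone"
  unfolding power2_norm_vec4 by (simp_all add: vec4_eq_iff power2_eq_square algebra_simps)

lemma qmult_qconj_unit:
  assumes "norm x = 1"
  shows "qmult x (qconj x) = qone" "qmult (qconj x) x = qone"
    "qmult x (qmult (qconj x) y) = y" "qmult (qconj x) (qmult x y) = y"
  using assms by (simp_all add: qmult_qconj qmult_assoc[symmetric])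

lemma qinv_unit: "norm x = 1 \<Longrightarrow> qinv x = qconj x"
  by (simp add: qinv_def)

lemma qinv_minus: "qinv (- x) = - qinv x"
  by (simp add: qinv_def)

lemma linear_qmult_qmult: "linear (\<lambda>x. qmult (qmult a x) b)"
  by (rule linearI) (simp_all add: qmult_distrib)

lemma continuous_on_quat [continuous_intros]:
  assumes "continuous_on S a" "continuous_on S b" "continuous_on S c" "continuous_on S d"
  shows "continuous_on S (\<lambda>x. quat (a x) (b x) (c x) (d x))"
  unfolding quat_def
proof (intro continuous_intros)
  show "continuous_on S (\<lambda>x. if n = 1 then a x else if n = 2 then b x else if n = 3 then c x else d x)"
    for n :: 4
    by (cases "n = 1"; cases "n = 2"; cases "n = 3") (simp_all add: assms)
qed

lemma continuous_on_qmult [continuous_intros]: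
  "continuous_on S f \<Longrightarrow> continuous_on S g \<Longrightarrow> continuous_on S (\<lambda>x. qmult (f x) (g x))"
  unfolding qmult_def by (intro continuous_intros)

lemma continuous_on_qconj [continuous_intros]:
  "continuous_on S f \<Longrightarrow> continuous_on S (\<lambda>x. qconj (f x))"
  unfolding qconj_def by (intro continuous_intros)

section \<open>The covering \<open>Sp(1) \<times> Sp(1) \<rightarrow> SO(4)\<close>\<close>

definition pmult :: "(real^4) \<times> (real^4) \<Rightarrow> (real^4) \<times> (real^4) \<Rightarrow> (real^4) \<times> (real^4)" where
  "pmult a b = (qmult (fst a) (fst b), qmult (snd a) (snd b))"

definition pconj :: "(real^4) \<times> (real^4) \<Rightarrow> (real^4) \<times> (real^4)" where
  "pconj a = (qconj (fst a), qconj (snd a))"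

lemma mem_Sp1xSp1_iff: "a \<in> Sp1xSp1 \<longleftrightarrow> norm (fst a) = 1 \<and> norm (snd a) = 1"
  by (cases a) (simp add: Sp1xSp1_def Sp1_def)

lemma Sp1xSp1_eq: "Sp1xSp1 = sphere 0 1 \<times> sphere 0 1"
  by (auto simp: Sp1xSp1_def Sp1_def)

lemma qone_qone_in_Sp1xSp1 [simp]: "(qone, qone) \<in> Sp1xSp1"
  and pmult_in_Sp1xSp1: "a \<in> Sp1xSp1 \<Longrightarrow> b \<in> Sp1xSp1 \<Longrightarrow> pmult a b \<in> Sp1xSp1"
  and pconj_in_Sp1xSp1: "a \<in> Sp1xSp1 \<Longrightarrow> pconj a \<in> Sp1xSp1"
  and uminus_in_Sp1xSp1: "a \<in> Sp1xSp1 \<Longrightarrow> - a \<in> Sp1xSp1"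
  by (simp_all add: mem_Sp1xSp1_iff pmult_def pconj_def norm_qmult)

lemma zero_notin_Sp1xSp1: "0 \<notin> Sp1xSp1"
  by (simp add: mem_Sp1xSp1_iff)

lemma compact_Sp1xSp1: "compact Sp1xSp1"
  and connected_Sp1xSp1: "connected Sp1xSp1"
  and simply_connected_Sp1xSp1: "simply_connected Sp1xSp1"
  unfolding Sp1xSp1_eq
  by (auto intro!: compact_Times connected_Times connected_sphere simply_connected_Times
      simply_connected_sphere)

lemma pcov_mult_vec: "pcov a *v x = qmult (qmult (qinv (fst a)) x) (snd a)"
  unfolding pcov_def using matrix_vector_mul(2)[OF linear_qmult_qmult] by metis

lemma pcov_mult_vec_unit: "a \<in> Sp1xSp1 \<Longrightarrow> pcov a *v x = qmult (qmult (qconj (fst a)) x) (snd a)"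
  by (simp add: pcov_mult_vec mem_Sp1xSp1_iff qinv_unit)

lemma pcov_mult:
  assumes "a \<in> Sp1xSp1" "b \<in> Sp1xSp1"
  shows "pcov a ** pcov b = pcov (pmult b a)"
  unfolding matrix_eq using assms pmult_in_Sp1xSp1[OF assms(2,1)]
  by (simp add: matrix_vector_mul_assoc[symmetric] pcov_mult_vec_unit pmult_def qmult_assoc
      qconj_qmult)

lemma pcov_qone: "pcov (qone, qone) = mat 1"
  unfolding matrix_eq by (simp add: pcov_mult_vec_unit)

lemma pcov_uminus: "pcov (- a) = pcov a"
  unfolding matrix_eq by (simp add: pcov_mult_vec qinv_minus)

lemma pcov_pconj:
  assumes "a \<in> Sp1xSp1"
  shows "pcov a ** pcov (pconj a) = mat 1" "pcov (pconj a) ** pcov a = mat 1"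
  using assms
  by (simp_all add: pcov_mult pconj_in_Sp1xSp1 pmult_def pconj_def mem_Sp1xSp1_iff
      qmult_qconj_unit pcov_qone)

lemma matrix_inv_eq:
  fixes A B :: "'a::semiring_1^'n^'n"
  assumes "A ** B = mat 1" "B ** A = mat 1"
  shows "matrix_inv A = B"
proof -
  have inv: "A ** matrix_inv A = mat 1" "matrix_inv A ** A = mat 1"
    using assms unfolding matrix_inv_def by (metis (mono_tags, lifting) someI_ex)+
  have "matrix_inv A = (B ** A) ** matrix_inv A" using assms by (simp add: matrix_mul_lid)
  also have "\<dots> = B" using inv by (simp add: matrix_mul_assoc[symmetric] matrix_mul_rid)
  finally show ?thesis .
qed

lemma matrix_inv_orthogonal: "orthogonal_matrix (A::real^'n^'n) \<Longrightarrow> matrix_inv A = transpose A"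
  by (simp add: matrix_inv_eq orthogonal_matrix_def)

lemma matrix_inv_pcov: "a \<in> Sp1xSp1 \<Longrightarrow> matrix_inv (pcov a) = pcov (pconj a)"
  by (simp add: matrix_inv_eq pcov_pconj)

lemma orthogonal_matrix_pcov:
  assumes "a \<in> Sp1xSp1"
  shows "orthogonal_matrix (pcov a)"
proof -
  have "orthogonal_transformation (\<lambda>x. qmult (qmult (qinv (fst a)) x) (snd a))"
    unfolding orthogonal_transformation using assms
    by (simp add: linear_qmult_qmult norm_qmult mem_Sp1xSp1_iff qinv_unit)
  then show ?thesis unfolding pcov_def orthogonal_transformation_matrix by simp
qed

lemma continuous_on_pcov: "continuous_on Sp1xSp1 pcov"
proof -
  have "continuous_on Sp1xSp1
      (\<lambda>a. (\<chi> i j. qmult (qmult (qconj (fst a)) (axis j 1)) (snd a) $ i) :: real^4^4)"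
    by (intro continuous_intros)
  then show ?thesis
    by (rule continuous_on_eq) (simp add: pcov_def matrix_def mem_Sp1xSp1_iff qinv_unit)
qed

lemma continuous_on_det [continuous_intros]:
  fixes f :: "'a::topological_space \<Rightarrow> real^'n^'n"
  shows "continuous_on S f \<Longrightarrow> continuous_on S (\<lambda>x. det (f x))"
  unfolding det_def by (intro continuous_intros)

lemma det_pcov:
  assumes "a \<in> Sp1xSp1"
  shows "det (pcov a) = 1"
proof -
  have "(\<lambda>b. det (pcov b)) constant_on Sp1xSp1"
  proof (rule continuous_finite_range_constant[OF connected_Sp1xSp1])
    show "continuous_on Sp1xSp1 (\<lambda>b. det (pcov b))"
      by (intro continuous_intros continuous_on_pcov)
    have "(\<lambda>b. det (pcov b)) ` Sp1xSp1 \<subseteq> {1, -1}"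
      using det_orthogonal_matrix orthogonal_matrix_pcov by blast
    then show "finite ((\<lambda>b. det (pcov b)) ` Sp1xSp1)" by (rule finite_subset) simp
  qed
  then show ?thesis
    using assms qone_qone_in_Sp1xSp1 by (metis constant_on_def pcov_qone det_I)
qed

lemma pcov_in_SO4: "a \<in> Sp1xSp1 \<Longrightarrow> pcov a \<in> SO4"
  by (simp add: SO4_def orthogonal_matrix_pcov det_pcov)

lemma SO4_mult: "A \<in> SO4 \<Longrightarrow> B \<in> SO4 \<Longrightarrow> A ** B \<in> SO4"
  by (simp add: SO4_def orthogonal_matrix_mul det_mul)

lemma qmult_commute_qi_qj_imp_real:
  assumes "norm u = 1" "qmult u qi = qmult qi u" "qmult u qj = qmult qj u"
  shows "u = qone \<or> u = - qone"
proof -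
  have z: "u$2 = 0" "u$3 = 0" "u$4 = 0" using assms(2,3) by (simp_all add: vec4_eq_iff)
  then have "(u$1)\<^sup>2 = 1" using assms(1) by (simp add: norm_vec4_eq_1_iff)
  then show ?thesis using z by (auto simp: vec4_eq_iff power2_eq_1_iff)
qed

text \<open>\<open>pcov a = pcov b\<close> makes \<open>u = g\<^sub>b g\<^sub>a\<^sup>-\<^sup>1\<close> satisfy \<open>u x = x v\<close> for all \<open>x\<close>, with
  \<open>v = h\<^sub>b h\<^sub>a\<^sup>-\<^sup>1\<close>; taking \<open>x = 1\<close> gives \<open>u = v\<close>, so \<open>u\<close> is central, i.e. \<open>\<plusminus>1\<close>.\<close>
lemma pcov_eq_imp_eq_or_minus:
  assumes a: "a \<in> Sp1xSp1" and b: "b \<in> Sp1xSp1" and eq: "pcov a = pcov b"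
  shows "b = a \<or> b = - a"
proof -
  obtain ga ha gb hb where ab: "a = (ga, ha)" "b = (gb, hb)" by (cases a, cases b)
  have n: "norm ga = 1" "norm ha = 1" "norm gb = 1" "norm hb = 1"
    using a b ab by (auto simp: mem_Sp1xSp1_iff)
  define u where "u = qmult gb (qconj ga)"
  define v where "v = qmult hb (qconj ha)"
  have central: "qmult u x = qmult x v" for x
  proof -
    have "qmult (qmult (qconj ga) x) ha = qmult (qmult (qconj gb) x) hb"
      using eq pcov_mult_vec_unit[OF a, of x] pcov_mult_vec_unit[OF b, of x] ab by simp
    then have "qmult gb (qmult (qmult (qmult (qconj ga) x) ha) (qconj ha))
             = qmult gb (qmult (qmult (qmult (qconj gb) x) hb) (qconj ha))" by simp
    then show ?thesis unfolding u_def v_def using n by (simp add: qmult_assoc qmult_qconj_unit)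
  qed
  have uv: "u = v" using central[of qone] by simp
  have "u = qone \<or> u = - qone"
    by (rule qmult_commute_qi_qj_imp_real) (use n central uv in \<open>auto simp: u_def norm_qmult\<close>)
  moreover have "gb = qmult u ga" "hb = qmult v ha"
    using n by (simp_all add: u_def v_def qmult_assoc qmult_qconj_unit)
  ultimately show ?thesis using ab uv by auto
qed

lemma pcov_eq_iff:
  "a \<in> Sp1xSp1 \<Longrightarrow> b \<in> Sp1xSp1 \<Longrightarrow> pcov a = pcov b \<longleftrightarrow> b = a \<or> b = - a"
  using pcov_eq_imp_eq_or_minus pcov_uminus by metis

lemma orthogonal_matrix_inner: "orthogonal_matrix B \<Longrightarrow> (B *v x) \<bullet> (B *v y) = x \<bullet> (y::real^'n)"
  by (metis orthogonal_transformation_def orthogonal_transformation_matrix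
      matrix_of_matrix_vector_mul matrix_vector_mul_linear)

lemma orthogonal_matrix_norm: "orthogonal_matrix B \<Longrightarrow> norm (B *v x) = norm (x::real^'n)"
  by (simp add: norm_eq_sqrt_inner orthogonal_matrix_inner)

lemma qmult_pure_unit_self: "r$1 = 0 \<Longrightarrow> norm r = 1 \<Longrightarrow> qmult r r = - qone"
  unfolding norm_vec4_eq_1_iff by (simp add: vec4_eq_iff power2_eq_square)

text \<open>The rotation of pure quaternions carrying \<open>r\<close> to \<open>s\<close> about the axis \<open>r \<times> s\<close> is
  conjugation by (a multiple of) \<open>1 - s r\<close>.\<close>
lemma pure_unit_conj_witness:
  assumes "r$1 = 0" "s$1 = 0" "norm r = 1" "norm s = 1" "r \<noteq> - s"
  shows "qone - qmult s r \<noteq> 0" "qmult s (qone - qmult s r) = qmult (qone - qmult s r) r"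
proof -
  have sq: "qmult s s = - qone" "qmult r r = - qone" using qmult_pure_unit_self assms by auto
  show "qone - qmult s r \<noteq> 0"
  proof
    assume "qone - qmult s r = 0"
    then have "qmult s (qmult s r) = s" by simp
    then show False using sq assms(5) by (auto simp: qmult_assoc[symmetric])
  qed
  have "qmult s (qone - qmult s r) = s + r" using sq by (simp add: qmult_distrib qmult_assoc[symmetric])
  moreover have "qmult (qone - qmult s r) r = s + r" using sq by (simp add: qmult_distrib qmult_assoc)
  ultimately show "qmult s (qone - qmult s r) = qmult (qone - qmult s r) r" by simp
qed

lemma unit_conj_from_intertwiner:
  assumes "c \<noteq> 0" "qmult s c = qmult c r"
  shows "norm (c /\<^sub>R norm c) = 1" "qmult (qmult (c /\<^sub>R norm c) r) (qconj (c /\<^sub>R norm c)) = s"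
proof -
  have "qmult (qmult c r) (qconj c) = (norm c)\<^sup>2 *\<^sub>R s"
    using assms(2)[symmetric] by (simp add: qmult_assoc qmult_qconj)
  then show "norm (c /\<^sub>R norm c) = 1" "qmult (qmult (c /\<^sub>R norm c) r) (qconj (c /\<^sub>R norm c)) = s"
    using assms(1) by (simp_all add: power2_eq_square divide_simps)
qed

lemma unit_conj_to_qi:
  assumes "r$1 = 0" "norm r = 1"
  shows "\<exists>c. norm c = 1 \<and> qmult (qmult c r) (qconj c) = qi"
proof (cases "r = - qi")
  case True
  then show ?thesis by (intro exI[of _ qj]) (simp add: vec4_eq_iff)
next
  case False
  have "qi$1 = 0" "norm qi = 1" by simp_all
  note intertwiner = pure_unit_conj_witness[OF assms(1) this(1) assms(2) this(2) False]
  show ?thesis using unit_conj_from_intertwiner[OF intertwiner] by blast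
qed

text \<open>For \<open>r \<bottom> i\<close> the intertwiner \<open>1 - j r\<close> lies in the span of \<open>1\<close> and \<open>i\<close>, so it
  commutes with \<open>i\<close>.\<close>
lemma unit_conj_to_qj_fixing_qi:
  assumes "r$1 = 0" "r$2 = 0" "norm r = 1"
  shows "\<exists>c. norm c = 1 \<and> qmult (qmult c r) (qconj c) = qj \<and> qmult (qmult c qi) (qconj c) = qi"
proof (cases "r = - qj")
  case True
  then show ?thesis by (intro exI[of _ qi]) (simp add: vec4_eq_iff)
next
  case False
  define c where "c = (qone - qmult qj r) /\<^sub>R norm (qone - qmult qj r)"
  have "qj$1 = 0" "norm qj = 1" by simp_all
  note intertwiner = pure_unit_conj_witness[OF assms(1) this(1) assms(3) this(2) False]
  have c: "norm c = 1" "qmult (qmult c r) (qconj c) = qj"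
    using unit_conj_from_intertwiner[OF intertwiner] by (simp_all add: c_def)
  have "qmult c qi = qmult qi c" using assms(1,2) by (simp add: c_def vec4_eq_iff)
  then have "qmult (qmult c qi) (qconj c) = qi" using c(1) by (simp add: qmult_assoc qmult_qconj_unit)
  with c show ?thesis by blast
qed

lemma SO4_fixing_qone_qi_qj:
  assumes "B \<in> SO4" and fixed: "B *v qone = qone" "B *v qi = qi" "B *v qj = qj"
  shows "B = mat 1"
proof -
  have o: "orthogonal_matrix B" and d: "det B = 1" using assms(1) by (simp_all add: SO4_def)
  let ?t = "B *v qk"
  have "?t \<bullet> qone = 0" "?t \<bullet> qi = 0" "?t \<bullet> qj = 0" "norm ?t = 1"
    using orthogonal_matrix_inner[OF o, of qk qone] orthogonal_matrix_inner[OF o, of qk qi]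
      orthogonal_matrix_inner[OF o, of qk qj] orthogonal_matrix_norm[OF o, of qk] fixed
    by (simp_all add: inner_vec4)
  then have t: "?t $ 1 = 0" "?t $ 2 = 0" "?t $ 3 = 0" "(?t $ 4)\<^sup>2 = 1"
    by (simp_all add: inner_vec4 norm_vec4_eq_1_iff)
  define \<tau> where "\<tau> = ?t $ 4"
  have entries: "B $ i $ k = (if k = 4 then (if i = 4 then \<tau> else 0) else (if i = k then 1 else 0))"
    for i k
  proof -
    have "(B *v axis k 1) $ i = (if k = 4 then (if i = 4 then \<tau> else 0) else (if i = k then 1 else 0))"
      using fixed t exhaust_4[of k] exhaust_4[of i] by (elim disjE) (simp_all add: axis_vec4 \<tau>_def)
    then show ?thesis by (simp add: matrix_vector_mult_basis column_def)
  qed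
  have "det B = \<tau>" by (subst det_diagonal) (simp_all only: entries UNIV_4, auto)
  then have "\<tau> = 1" using d by simp
  then show ?thesis by (simp only: vec_eq_iff entries mat_def) simp
qed

lemma pcov_conj_mult_vec: "norm c = 1 \<Longrightarrow> pcov (qconj c, qconj c) *v x = qmult (qmult c x) (qconj c)"
  by (simp add: pcov_mult_vec_unit mem_Sp1xSp1_iff)

lemma pcov_image_absorb:
  assumes "a \<in> Sp1xSp1" "pcov a ** A \<in> pcov ` Sp1xSp1"
  shows "A \<in> pcov ` Sp1xSp1"
proof -
  obtain b where b: "b \<in> Sp1xSp1" "pcov a ** A = pcov b" using assms(2) by blast
  have "A = pcov (pconj a) ** (pcov a ** A)"
    using pcov_pconj[OF assms(1)] by (simp add: matrix_mul_assoc matrix_mul_lid)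
  also have "\<dots> = pcov (pmult b (pconj a))"
    using b assms(1) by (simp add: pcov_mult pconj_in_Sp1xSp1)
  finally show ?thesis using b assms(1) by (simp add: pmult_in_Sp1xSp1 pconj_in_Sp1xSp1)
qed

lemma SO4_fix_qone_by_pcov:
  assumes "A \<in> SO4"
  shows "\<exists>a\<in>Sp1xSp1. (pcov a ** A) *v qone = qone"
proof
  have "norm (A *v qone) = 1" using assms by (simp add: SO4_def orthogonal_matrix_norm)
  then show "(qone, qconj (A *v qone)) \<in> Sp1xSp1"
    and "(pcov (qone, qconj (A *v qone)) ** A) *v qone = qone"
    by (simp_all add: mem_Sp1xSp1_iff matrix_vector_mul_assoc[symmetric] pcov_mult_vec_unit
        qmult_qconj_unit)
qed

lemma SO4_fix_qi_by_pcov: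
  assumes "A \<in> SO4" "A *v qone = qone"
  shows "\<exists>a\<in>Sp1xSp1. (pcov a ** A) *v qone = qone \<and> (pcov a ** A) *v qi = qi"
proof -
  have o: "orthogonal_matrix A" using assms(1) by (simp add: SO4_def)
  have "(A *v qi) \<bullet> qone = 0" "norm (A *v qi) = 1"
    using assms(2) orthogonal_matrix_inner[OF o, of qi qone] orthogonal_matrix_norm[OF o, of qi]
    by (simp_all add: inner_vec4)
  then obtain c where c: "norm c = 1" "qmult (qmult c (A *v qi)) (qconj c) = qi"
    using unit_conj_to_qi[of "A *v qi"] by (auto simp: inner_vec4)
  show ?thesis
    using c assms(2)
    by (intro bexI[of _ "(qconj c, qconj c)"])
       (simp_all add: mem_Sp1xSp1_iff matrix_vector_mul_assoc[symmetric] pcov_conj_mult_vec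
        qmult_qconj_unit)
qed

lemma SO4_fix_qj_by_pcov:
  assumes "A \<in> SO4" "A *v qone = qone" "A *v qi = qi"
  shows "\<exists>a\<in>Sp1xSp1. (pcov a ** A) *v qone = qone \<and> (pcov a ** A) *v qi = qi
    \<and> (pcov a ** A) *v qj = qj"
proof -
  have o: "orthogonal_matrix A" using assms(1) by (simp add: SO4_def)
  have "(A *v qj) \<bullet> qone = 0" "(A *v qj) \<bullet> qi = 0" "norm (A *v qj) = 1"
    using assms(2,3) orthogonal_matrix_inner[OF o, of qj qone]
      orthogonal_matrix_inner[OF o, of qj qi] orthogonal_matrix_norm[OF o, of qj]
    by (simp_all add: inner_vec4)
  then obtain c where c: "norm c = 1" "qmult (qmult c (A *v qj)) (qconj c) = qj"
      "qmult (qmult c qi) (qconj c) = qi"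
    using unit_conj_to_qj_fixing_qi[of "A *v qj"] by (auto simp: inner_vec4)
  show ?thesis
    using c assms(2,3)
    by (intro bexI[of _ "(qconj c, qconj c)"])
       (simp_all add: mem_Sp1xSp1_iff matrix_vector_mul_assoc[symmetric] pcov_conj_mult_vec
        qmult_qconj_unit)
qed

lemma pcov_image_Sp1xSp1: "pcov ` Sp1xSp1 = SO4"
proof
  show "pcov ` Sp1xSp1 \<subseteq> SO4" using pcov_in_SO4 by blast
  show "SO4 \<subseteq> pcov ` Sp1xSp1"
  proof
    fix A assume A: "A \<in> SO4"
    obtain a1 where a1: "a1 \<in> Sp1xSp1" "(pcov a1 ** A) *v qone = qone"
      using SO4_fix_qone_by_pcov[OF A] by blast
    let ?A1 = "pcov a1 ** A"
    have A1: "?A1 \<in> SO4" using A a1(1) by (simp add: SO4_mult pcov_in_SO4)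
    obtain a2 where a2: "a2 \<in> Sp1xSp1" "(pcov a2 ** ?A1) *v qone = qone" "(pcov a2 ** ?A1) *v qi = qi"
      using SO4_fix_qi_by_pcov[OF A1 a1(2)] by blast
    let ?A2 = "pcov a2 ** ?A1"
    have A2: "?A2 \<in> SO4" using A1 a2(1) by (simp add: SO4_mult pcov_in_SO4)
    obtain a3 where a3: "a3 \<in> Sp1xSp1" "(pcov a3 ** ?A2) *v qone = qone" "(pcov a3 ** ?A2) *v qi = qi"
        "(pcov a3 ** ?A2) *v qj = qj"
      using SO4_fix_qj_by_pcov[OF A2 a2(2,3)] by blast
    have "pcov a3 ** ?A2 = pcov (qone, qone)"
      using SO4_fixing_qone_qi_qj[OF _ a3(2-4)] A2 a3(1) by (simp add: SO4_mult pcov_in_SO4 pcov_qone)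
    then show "A \<in> pcov ` Sp1xSp1"
      using a1(1) a2(1) a3(1) by (metis pcov_image_absorb qone_qone_in_Sp1xSp1 image_eqI)
  qed
qed

locale antipodal_cover =
  fixes C :: "'a::real_normed_vector set" and p :: "'a \<Rightarrow> 'b::metric_space" and S :: "'b set"
  assumes compact: "compact C"
    and uminus_mem: "\<And>a. a \<in> C \<Longrightarrow> - a \<in> C"
    and zero_notin: "0 \<notin> C"
    and continuous: "continuous_on C p"
    and image: "p ` C = S"
    and fibre: "\<And>a b. a \<in> C \<Longrightarrow> b \<in> C \<Longrightarrow> p a = p b \<longleftrightarrow> b = a \<or> b = - a"
begin

lemma open_map:
  assumes "openin (top_of_set C) V"
  shows "openin (top_of_set S) (p ` V)"
proof -
  obtain Op where Op: "open Op" "V = C \<inter> Op" using assms by (auto simp: openin_open)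
  define K where "K = C - (Op \<union> uminus ` Op)"
  have "compact K"
    unfolding K_def Diff_eq using Op(1)
    by (intro compact_Int_closed compact closed_Compl open_Un open_negations)
  then have "closed (p ` K)"
    by (intro compact_imp_closed compact_continuous_image continuous_on_subset[OF continuous])
       (auto simp: K_def)
  moreover have "p ` K \<subseteq> S" using image by (auto simp: K_def)
  ultimately have "closedin (top_of_set S) (p ` K)" by (simp add: closed_subset)
  moreover have "p ` V = S - p ` K"
  proof
    show "p ` V \<subseteq> S - p ` K"
    proof (rule image_subsetI)
      fix v assume "v \<in> V"
      then have v: "v \<in> C" "v \<in> Op" using Op(2) by auto
      have "p v \<notin> p ` K"
      proof
        assume "p v \<in> p ` K"
        then obtain b where b: "b \<in> K" "p v = p b" by auto
        then have "b = v \<or> b = - v" using fibre[OF v(1)] by (simp add: K_def)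
        then show False using b(1) v(2) by (auto simp: K_def)
      qed
      then show "p v \<in> S - p ` K" using v(1) image by blast
    qed
    show "S - p ` K \<subseteq> p ` V"
    proof
      fix x assume x: "x \<in> S - p ` K"
      then obtain b where b: "b \<in> C" "x = p b" using image by blast
      then have "b \<in> Op \<or> - b \<in> Op" using x by (auto simp: K_def)
      moreover have "p (- b) = p b" using fibre[OF uminus_mem[OF b(1)] b(1)] by simp
      ultimately show "x \<in> p ` V" using b Op(2) uminus_mem by (metis IntI image_eqI)
    qed
  qed
  ultimately show ?thesis by (simp add: openin_diff)
qed

lemma homeomorphism_on_half:
  assumes U: "openin (top_of_set C) U" and disj: "\<And>b. b \<in> U \<Longrightarrow> - b \<notin> U"
  shows "\<exists>q. homeomorphism U (p ` U) p q"
proof -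
  have UC: "U \<subseteq> C" using U by (simp add: openin_imp_subset)
  obtain q where "homeomorphism U (p ` U) p q"
  proof (rule homeomorphism_injective_open_map)
    show "continuous_on U p" using continuous_on_subset[OF continuous UC] .
    show "inj_on p U"
    proof
      fix a b assume "a \<in> U" "b \<in> U" "p a = p b"
      then show "a = b" using fibre[of a b] disj UC by blast
    qed
    fix W assume W: "openin (top_of_set U) W"
    have "openin (top_of_set S) (p ` W)" by (rule open_map[OF openin_trans[OF W U]])
    moreover have "p ` W \<subseteq> p ` U" "p ` U \<subseteq> S" using openin_imp_subset[OF W] UC image by auto
    ultimately show "openin (top_of_set (p ` U)) (p ` W)" by (rule openin_subset_trans)
  qed auto
  then show ?thesis by blast
qed

text \<open>Over \<open>p a\<close> the evenly covered sheets are the two balls of radius \<open>\<parallel>a\<parallel>\<close> about \<open>\<plusminus>a\<close>,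
  which are disjoint and swapped by \<open>uminus\<close>.\<close>
theorem covering_space: "covering_space C p S"
proof
  show "continuous_on C p" by (rule continuous)
  show "p ` C = S" by (rule image)
  fix x assume "x \<in> S"
  then obtain a where a: "a \<in> C" "p a = x" using image by blast
  define U where "U = C \<inter> ball a (norm a)"
  define U' where "U' = C \<inter> ball (- a) (norm a)"
  have minus_U: "- b \<in> U' \<longleftrightarrow> b \<in> U" for b
    using uminus_mem[of b] uminus_mem[of "- b"] dist_minus[of "- a" "- b"]
    by (auto simp: U_def U'_def)
  have disj: "- b \<notin> U" if "b \<in> U" for b
  proof
    assume "- b \<in> U"
    then have "b \<in> U'" using minus_U[of "- b"] by simp
    then have "dist a (- a) < 2 * norm a"
      using that dist_triangle[of a "- a" b] by (simp add: U_def U'_def dist_commute)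
    then show False by (simp add: dist_norm norm_minus_commute[of a] flip: scaleR_2)
  qed
  have disj': "- b \<notin> U'" if "b \<in> U'" for b
    using disj minus_U that by (metis minus_minus)
  have opens: "openin (top_of_set C) U" "openin (top_of_set C) U'"
    by (auto simp: U_def U'_def openin_open_Int)
  have p_minus: "p (- b) = p b" if "b \<in> C" for b
    using fibre[OF uminus_mem[OF that] that] by simp
  have p_U': "p ` U' = p ` U"
  proof -
    have "U' = uminus ` U" using minus_U by (auto simp: image_iff) (metis minus_minus)
    then have "p ` U' = (\<lambda>b. p (- b)) ` U" by (simp add: image_image)
    also have "\<dots> = p ` U" using p_minus by (intro image_cong) (auto simp: U_def)
    finally show ?thesis .
  qed
  have fibre_U: "C \<inter> p -` p ` U = \<Union>{U, U'}"
  proof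
    show "C \<inter> p -` p ` U \<subseteq> \<Union>{U, U'}"
    proof clarify
      fix b u assume b: "b \<in> C" "u \<in> U" "p b = p u"
      then have "b = u \<or> b = - u" using fibre[of u b] by (simp add: U_def)
      then show "b \<in> \<Union>{U, U'}" using b(2) minus_U by auto
    qed
    have "U \<subseteq> C" "U' \<subseteq> C" "p ` U' \<subseteq> p ` U" using p_U' by (auto simp: U_def U'_def)
    then show "\<Union>{U, U'} \<subseteq> C \<inter> p -` p ` U" by blast
  qed
  have "a \<in> U" using a zero_notin by (auto simp: U_def)
  moreover have "pairwise disjnt {U, U'}"
  proof -
    have "U \<inter> U' = {}" using disj minus_U by (metis disjoint_iff minus_minus)
    then show ?thesis by (auto simp: pairwise_def disjnt_def)
  qed
  moreover have "\<forall>u\<in>{U, U'}. \<exists>q. homeomorphism u (p ` U) p q"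
    using homeomorphism_on_half[OF opens(1) disj] homeomorphism_on_half[OF opens(2) disj'] p_U'
    by auto
  ultimately show "\<exists>T. x \<in> T \<and> openin (top_of_set S) T \<and>
          (\<exists>v. \<Union>v = C \<inter> p -` T \<and> (\<forall>u\<in>v. openin (top_of_set C) u) \<and>
               pairwise disjnt v \<and> (\<forall>u\<in>v. \<exists>q. homeomorphism u T p q))"
    using a open_map[OF opens(1)] fibre_U opens
    by (intro exI[of _ "p ` U"] conjI exI[of _ "{U, U'}"]) auto
qed

end

lemma covering_space_pcov: "covering_space Sp1xSp1 pcov SO4"
proof (rule antipodal_cover.covering_space)
  show "antipodal_cover Sp1xSp1 pcov SO4"
    by unfold_locales
       (simp_all add: compact_Sp1xSp1 uminus_in_Sp1xSp1 zero_notin_Sp1xSp1 continuous_on_pcov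
        pcov_image_Sp1xSp1 pcov_eq_iff)
qed

section \<open>The involution \<open>T\<close> and lifts of symmetric loops\<close>

lemma Tmap_eq: "Tmap a = (qconj (fst a), quat (snd a $ 1) (snd a $ 2) (- snd a $ 3) (snd a $ 4))"
proof -
  have "qinv qj = - qj" by (simp add: qinv_unit vec4_eq_iff)
  then show ?thesis by (simp add: Tmap_def vec4_eq_iff)
qed

lemma Tmap_in_Sp1xSp1: "a \<in> Sp1xSp1 \<Longrightarrow> Tmap a \<in> Sp1xSp1"
  by (simp add: Tmap_eq mem_Sp1xSp1_iff norm_vec4_eq_1_iff)

lemma continuous_on_Tmap [continuous_intros]:
  "continuous_on S f \<Longrightarrow> continuous_on S (\<lambda>x. Tmap (f x))"
  unfolding Tmap_eq by (intro continuous_intros)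

lemma wmat_eq: "wmat = pcov (qone, qj)"
  unfolding matrix_eq
proof
  have j: "(qone, qj) \<in> Sp1xSp1" by (simp add: mem_Sp1xSp1_iff)
  show "wmat *v x = pcov (qone, qj) *v x" for x
    unfolding pcov_mult_vec_unit[OF j] by (simp add: wmat_def matrix_vector_mult_def sum_4 vec4_eq_iff)
qed

text \<open>Conjugation by \<open>w = p(1, j)\<close> upstairs is \<open>(u, v) \<mapsto> (u, j\<^sup>-\<^sup>1 v j)\<close>, which is \<open>T\<close>
  composed with inversion.\<close>
lemma wmat_conj_pcov:
  assumes "a \<in> Sp1xSp1"
  shows "wmat ** pcov a ** matrix_inv wmat = matrix_inv (pcov (Tmap a))"
proof -
  have j: "(qone, qj) \<in> Sp1xSp1" "(qone, qconj qj) \<in> Sp1xSp1" by (simp_all add: mem_Sp1xSp1_iff)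
  have "matrix_inv wmat = pcov (qone, qconj qj)"
    using matrix_inv_pcov[OF j(1)] by (simp add: wmat_eq pconj_def)
  then have "wmat ** pcov a ** matrix_inv wmat = pcov (pmult (qone, qconj qj) (pmult a (qone, qj)))"
    by (simp add: wmat_eq pcov_mult assms j pmult_in_Sp1xSp1)
  also have "pmult (qone, qconj qj) (pmult a (qone, qj)) = pconj (Tmap a)"
    by (simp add: pmult_def pconj_def Tmap_eq vec4_eq_iff prod_eq_iff)
  finally show ?thesis by (simp add: matrix_inv_pcov Tmap_in_Sp1xSp1 assms)
qed

lemma pcov_Tmap_symmetric_loop:
  assumes V: "symmetric_loop V" and a: "a \<in> Sp1xSp1" "pcov a = V (- k)"
  shows "pcov (Tmap a) = V k"
proof -
  have "matrix_inv (pcov (Tmap a)) = matrix_inv (V k)"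
    using V wmat_conj_pcov[OF a(1)] unfolding a(2) symmetric_loop_def by (metis minus_minus)
  moreover have "orthogonal_matrix (pcov (Tmap a))" "orthogonal_matrix (V k)"
    using a V by (simp_all add: orthogonal_matrix_pcov Tmap_in_Sp1xSp1 symmetric_loop_def SO4_def)
  ultimately show ?thesis by (metis matrix_inv_orthogonal transpose_transpose)
qed

lemma X0_iff: "a \<in> X0 \<longleftrightarrow> fst a = qone \<and> snd a $ 3 = 0 \<and> norm (snd a) = 1"
proof
  assume "a \<in> X0"
  then show "fst a = qone \<and> snd a $ 3 = 0 \<and> norm (snd a) = 1"
    by (auto simp: X0_def qone_def norm_vec4_eq_1_iff)
next
  assume h: "fst a = qone \<and> snd a $ 3 = 0 \<and> norm (snd a) = 1"
  then have "a = (quat 1 0 0 0, quat (snd a $ 1) (snd a $ 2) 0 (snd a $ 4))"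
    by (simp add: prod_eq_iff qone_def vec4_eq_iff)
  moreover have "(snd a $ 1)\<^sup>2 + (snd a $ 2)\<^sup>2 + (snd a $ 4)\<^sup>2 = 1"
    using h by (auto simp: norm_vec4_eq_1_iff)
  ultimately show "a \<in> X0" unfolding X0_def by blast
qed

lemma Y0_iff: "a \<in> Y0 \<longleftrightarrow> fst a = - qone \<and> snd a $ 3 = 0 \<and> norm (snd a) = 1"
proof -
  have "Y0 = uminus ` X0" unfolding Y0_def by (intro image_cong) auto
  moreover have "a \<in> uminus ` X0 \<longleftrightarrow> - a \<in> X0"
    using image_eqI[of a uminus "- a" X0] by auto
  ultimately have "a \<in> Y0 \<longleftrightarrow> - a \<in> X0" by simp
  moreover have "- fst a = qone \<longleftrightarrow> fst a = - qone" by (metis minus_minus)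
  ultimately show ?thesis by (simp add: X0_iff)
qed

lemma fst_X0: "a \<in> X0 \<Longrightarrow> fst a $ 1 = 1" and fst_Y0: "a \<in> Y0 \<Longrightarrow> fst a $ 1 = - 1"
  by (simp_all add: X0_iff Y0_iff)

lemma X0_subset_Sp1xSp1: "X0 \<subseteq> Sp1xSp1" and Y0_subset_Sp1xSp1: "Y0 \<subseteq> Sp1xSp1"
  by (auto simp: X0_iff Y0_iff mem_Sp1xSp1_iff)

lemma qone_qone_in_X0: "(qone, qone) \<in> X0"
  by (simp add: X0_iff)

lemma Tmap_fixed_iff:
  assumes "a \<in> Sp1xSp1"
  shows "Tmap a = a \<longleftrightarrow> a \<in> X0 \<union> Y0"
proof
  assume "Tmap a = a"
  then have z: "fst a $ 2 = 0" "fst a $ 3 = 0" "fst a $ 4 = 0" "snd a $ 3 = 0"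
    by (auto simp: Tmap_eq prod_eq_iff vec4_eq_iff)
  then have "(fst a $ 1)\<^sup>2 = 1" using assms by (simp add: mem_Sp1xSp1_iff norm_vec4_eq_1_iff)
  then have "fst a = qone \<or> fst a = - qone" using z by (auto simp: vec4_eq_iff power2_eq_1_iff)
  then show "a \<in> X0 \<union> Y0" using assms z by (auto simp: X0_iff Y0_iff mem_Sp1xSp1_iff)
next
  assume "a \<in> X0 \<union> Y0"
  then show "Tmap a = a" by (auto simp: X0_iff Y0_iff Tmap_eq prod_eq_iff vec4_eq_iff)
qed

lemma path_connected_X0: "path_connected X0"
proof -
  define \<psi> :: "real^3 \<Rightarrow> (real^4) \<times> (real^4)" where "\<psi> x = (qone, quat (x$1) (x$2) 0 (x$3))" for x
  have "X0 = \<psi> ` sphere 0 1"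
  proof
    show "\<psi> ` sphere 0 1 \<subseteq> X0"
    proof (rule image_subsetI)
      fix x :: "real^3" assume "x \<in> sphere 0 1"
      moreover have "(norm x)\<^sup>2 = (x$1)\<^sup>2 + (x$2)\<^sup>2 + (x$3)\<^sup>2"
        by (simp add: power2_norm_eq_inner inner_vec_def sum_3 flip: power2_eq_square)
      ultimately show "\<psi> x \<in> X0" by (simp add: X0_iff \<psi>_def norm_vec4_eq_1_iff)
    qed
  next
    show "X0 \<subseteq> \<psi> ` sphere 0 1"
    proof
      fix a assume a: "a \<in> X0"
      define x :: "real^3" where "x = vector [snd a $ 1, snd a $ 2, snd a $ 4]"
      have "(snd a $ 1)\<^sup>2 + (snd a $ 2)\<^sup>2 + (snd a $ 4)\<^sup>2 = 1"
        using a by (auto simp: X0_iff norm_vec4_eq_1_iff)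
      then have "norm x = 1" by (simp add: x_def norm_eq_1 inner_vec_def sum_3 power2_eq_square)
      moreover have "\<psi> x = a" using a by (simp add: \<psi>_def x_def X0_iff prod_eq_iff vec4_eq_iff)
      ultimately show "a \<in> \<psi> ` sphere 0 1" by force
    qed
  qed
  moreover have "continuous_on (sphere 0 1) \<psi>" unfolding \<psi>_def by (intro continuous_intros)
  ultimately show ?thesis
    using path_connected_continuous_image path_connected_sphere_eq by fastforce
qed

lemma pcov_lift_eqI:
  assumes S: "connected S" "a \<in> S" "x \<in> S"
    and f: "continuous_on S f" "f \<in> S \<rightarrow> Sp1xSp1"
    and g: "continuous_on S g" "g \<in> S \<rightarrow> Sp1xSp1"
    and eq: "\<And>y. y \<in> S \<Longrightarrow> pcov (f y) = pcov (g y)" "f a = g a"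
  shows "f x = g x"
proof (rule covering_space_lift_unique[OF covering_space_pcov eq(2) _ _ f _ g _ S(1-3)])
  show "continuous_on S (\<lambda>y. pcov (g y))"
    using g by (intro continuous_on_compose2[OF continuous_on_pcov]) auto
  show "(\<lambda>y. pcov (g y)) \<in> S \<rightarrow> SO4" using g(2) by (auto intro!: pcov_in_SO4)
qed (use eq in auto)

lemma is_lift_in_Sp1xSp1: "is_lift L W \<Longrightarrow> L k \<in> Sp1xSp1"
  and is_lift_pcov: "is_lift L W \<Longrightarrow> pcov (L k) = W k"
  and is_lift_continuous: "is_lift L W \<Longrightarrow> continuous_on UNIV L"
  by (simp_all add: is_lift_def)

lemma is_lift_unique:
  assumes "is_lift L W" "is_lift M W" "L a = M a"
  shows "L x = M x"
  using assms by (intro pcov_lift_eqI[of UNIV a x L M]) (auto simp: is_lift_def)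

lemma is_lift_uminus: "is_lift L W \<Longrightarrow> is_lift (\<lambda>k. - L k) W"
  unfolding is_lift_def by (auto intro: continuous_intros simp: uminus_in_Sp1xSp1 pcov_uminus)

text \<open>Null-homotopy of \<open>W\<close> in \<open>SO(4)\<close> lifts to a homotopy of paths in the cover, so by
  monodromy every lift closes up after one period.\<close>
lemma is_lift_periodic:
  assumes W: "symmetric_loop W" and nh: "nullhomotopic_SO4 W" and L: "is_lift L W"
  shows "L (k + 2 * pi) = L k"
proof -
  define g where "g = (\<lambda>t. W (2 * pi * t))"
  obtain a where "homotopic_loops SO4 g (linepath a a)"
    using nh by (auto simp: nullhomotopic_SO4_def g_def)
  then have hp: "homotopic_paths SO4 g (linepath (pathstart g) (pathstart g))"
    by (rule homotopic_loops_imp_homotopic_paths_null)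
  have WS: "W k \<in> SO4" for k using W by (simp add: symmetric_loop_def)
  have pL: "path (\<lambda>t. L (2 * pi * t))" unfolding path_def
    by (rule continuous_on_compose2[OF is_lift_continuous[OF L]]) (auto intro: continuous_intros)
  have "pathfinish (\<lambda>t. L (2 * pi * t)) = pathfinish (linepath (L 0) (L 0))"
  proof (rule covering_space_monodromy[OF covering_space_pcov _ _ _ _ hp pL])
    show "path g" unfolding g_def path_def using W unfolding symmetric_loop_def
      by (auto intro!: continuous_on_compose2[of UNIV W] continuous_intros)
  qed (use WS is_lift_in_Sp1xSp1[OF L] is_lift_pcov[OF L] in
      \<open>auto simp: path_image_def g_def pathstart_def linepath_refl path_const\<close>)
  then have "L (0 + 2 * pi) = L 0" by (simp add: pathfinish_def)
  moreover have "is_lift (\<lambda>k. L (k + 2 * pi)) W"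
    using L W unfolding is_lift_def symmetric_loop_def
    by (auto intro!: continuous_on_compose2[of UNIV L] continuous_intros)
  ultimately show ?thesis using is_lift_unique[OF _ L, of "\<lambda>k. L (k + 2 * pi)" 0 k] by simp
qed

lemma is_lift_reflect:
  assumes W: "symmetric_loop W" and L: "is_lift L W"
  shows "is_lift (\<lambda>k. Tmap (L (- k))) W"
  unfolding is_lift_def
proof (intro conjI allI)
  show "continuous_on UNIV (\<lambda>k. Tmap (L (- k)))"
    by (intro continuous_intros continuous_on_compose2[OF is_lift_continuous[OF L]]) auto
  show "Tmap (L (- k)) \<in> Sp1xSp1" for k by (simp add: Tmap_in_Sp1xSp1 is_lift_in_Sp1xSp1[OF L])
  show "pcov (Tmap (L (- k))) = W k" for k
    by (rule pcov_Tmap_symmetric_loop[OF W])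
       (simp_all add: is_lift_in_Sp1xSp1[OF L] is_lift_pcov[OF L])
qed

lemma is_lift_symmetric:
  assumes "symmetric_loop W" "is_lift L W" "Tmap (L 0) = L 0"
  shows "Tmap (L (- k)) = L k"
  using is_lift_unique[OF is_lift_reflect[OF assms(1,2)] assms(2), of 0 k] assms(3) by simp

section \<open>Symmetric extension of paths\<close>

lemma Tmap_Tmap [simp]: "Tmap (Tmap a) = a"
  by (simp add: Tmap_eq vec4_eq_iff prod_eq_iff)

definition Tmap_fixed_ends :: "(real \<Rightarrow> (real^4) \<times> (real^4)) \<Rightarrow> bool" where
  "Tmap_fixed_ends g \<longleftrightarrow> Tmap (g 0) = g 0 \<and> Tmap (g 1) = g 1"

definition angle_param :: "real \<Rightarrow> real" where
  "angle_param k = arccos (cos k) / pi"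

text \<open>A path \<open>g\<close> on \<open>[0, 1]\<close> traversed on \<open>[0, \<pi>]\<close> and mirrored by \<open>T\<close> onto \<open>[-\<pi>, 0]\<close>,
  extended \<open>2\<pi>\<close>-periodically.\<close>
definition sym_extension ::
    "(real \<Rightarrow> (real^4) \<times> (real^4)) \<Rightarrow> real \<Rightarrow> (real^4) \<times> (real^4)" where
  "sym_extension g k = (if sin k \<le> 0 then Tmap (g (angle_param k)) else g (angle_param k))"

lemma angle_param_bounds: "0 \<le> angle_param k" "angle_param k \<le> 1"
  using arccos_bounded[of "cos k"] by (simp_all add: angle_param_def divide_simps)

lemma continuous_on_angle_param: "continuous_on S angle_param"
  unfolding angle_param_def by (intro continuous_intros) auto

lemma angle_param_sin_eq_0: "sin k = 0 \<Longrightarrow> angle_param k = 0 \<or> angle_param k = 1"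
proof -
  assume "sin k = 0"
  then have "cos k = 1 \<or> cos k = -1" using sin_cos_squared_add[of k] by (simp add: power2_eq_1_iff)
  then show ?thesis by (auto simp: angle_param_def)
qed

lemma sym_extension_periodic: "sym_extension g (k + 2 * pi) = sym_extension g k"
  by (simp add: sym_extension_def angle_param_def)

lemma sym_extension_minus:
  assumes "Tmap_fixed_ends g"
  shows "sym_extension g (- k) = Tmap (sym_extension g k)"
proof (cases "sin k = 0")
  case True
  then have "Tmap (g (angle_param k)) = g (angle_param k)"
    using angle_param_sin_eq_0[of k] assms by (auto simp: Tmap_fixed_ends_def)
  then show ?thesis using True by (simp add: sym_extension_def angle_param_def)
next
  case False
  then show ?thesis by (auto simp: sym_extension_def angle_param_def)
qed

lemma sym_extension_const [simp]: "Tmap a = a \<Longrightarrow> sym_extension (\<lambda>s. a) k = a"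
  by (simp add: sym_extension_def)

lemma sin_nonneg_imp_arccos_cos:
  assumes "0 \<le> sin k"
  shows "\<exists>n::int. k = arccos (cos k) + 2 * pi * n"
proof -
  have "sin (arccos (cos k)) = sqrt ((sin k)\<^sup>2)" by (simp add: sin_arccos sin_squared_eq)
  then have "sin k = sin (arccos (cos k)) \<and> cos k = cos (arccos (cos k))" using assms by simp
  then show ?thesis by (simp only: sin_cos_eq_iff)
qed

lemma sin_nonpos_imp_arccos_cos:
  assumes "sin k \<le> 0"
  shows "\<exists>n::int. k = - arccos (cos k) + 2 * pi * n"
proof -
  obtain n :: int where "- k = arccos (cos k) + 2 * pi * n"
    using sin_nonneg_imp_arccos_cos[of "- k"] assms by auto
  then show ?thesis by (intro exI[of _ "- n"]) (simp add: algebra_simps)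
qed

lemma sym_extension_lift:
  assumes W: "symmetric_loop W" and L: "is_lift L W" "Tmap (L 0) = L 0"
    and per: "\<And>k. L (k + 2 * pi) = L k"
  shows "sym_extension (\<lambda>s. L (pi * s)) k = L k"
proof -
  interpret periodic_fun_simple L "2 * pi" using per by unfold_locales
  have int_shift: "L (x + 2 * pi * of_int n) = L x" for x n
    using plus_of_int[of x n] by (simp add: mult.commute)
  have arc: "pi * angle_param k = arccos (cos k)" by (simp add: angle_param_def)
  show ?thesis
  proof (cases "sin k \<le> 0")
    case True
    then obtain n :: int where n: "k = - arccos (cos k) + 2 * pi * n"
      using sin_nonpos_imp_arccos_cos by blast
    have "L k = L (- arccos (cos k))" by (metis n int_shift)
    then show ?thesis
      using True is_lift_symmetric[OF W L, of "- arccos (cos k)"] by (simp add: sym_extension_def arc)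
  next
    case False
    then obtain n :: int where n: "k = arccos (cos k) + 2 * pi * n"
      using sin_nonneg_imp_arccos_cos by fastforce
    have "L k = L (arccos (cos k))" by (metis n int_shift)
    then show ?thesis using False by (simp add: sym_extension_def arc)
  qed
qed

text \<open>A homotopy of paths whose endpoints stay \<open>T\<close>-fixed extends, slice by slice, to a
  symmetric homotopy of loops; the two halves glue where \<open>sin k = 0\<close>.\<close>
lemma symmetrically_homotopic_sym_extension:
  assumes "homotopic_with_canon Tmap_fixed_ends {0..1} Sp1xSp1 g g'"
  shows "symmetrically_homotopic (\<lambda>k. pcov (sym_extension g k)) (\<lambda>k. pcov (sym_extension g' k))"
proof -
  obtain h :: "real \<times> real \<Rightarrow> (real^4) \<times> (real^4)"
    where h: "continuous_on ({0..1} \<times> {0..1}) h" "h \<in> {0..1} \<times> {0..1} \<rightarrow> Sp1xSp1"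
      "\<And>x. h (0, x) = g x" "\<And>x. h (1, x) = g' x"
      "\<And>t. t \<in> {0..1} \<Longrightarrow> Tmap_fixed_ends (\<lambda>x. h (t, x))"
    using assms
    unfolding homotopic_with_def prod_topology_subtopology_eu continuous_map_subtopology_eu by blast
  define D where "D = (UNIV :: real set) \<times> {0..1::real}"
  define F where "F z = sym_extension (\<lambda>s. h (snd z, s)) (fst z)" for z
  have F_in: "F z \<in> Sp1xSp1" if "z \<in> D" for z
  proof -
    have "h (snd z, angle_param (fst z)) \<in> Sp1xSp1"
      using that h(2) angle_param_bounds by (auto simp: D_def mem_Times_iff)
    then show ?thesis by (simp add: F_def sym_extension_def Tmap_in_Sp1xSp1)
  qed
  have cont_half: "continuous_on D (\<lambda>z. h (snd z, angle_param (fst z)))"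
    unfolding D_def
    by (rule continuous_on_compose2[OF h(1)])
       (auto intro!: continuous_intros continuous_on_compose2[OF continuous_on_angle_param]
        simp: angle_param_bounds mem_Times_iff)
  have "continuous_on D F"
    unfolding F_def sym_extension_def
  proof (rule continuous_on_cases_le)
    show "continuous_on {z \<in> D. sin (fst z) \<le> 0} (\<lambda>z. Tmap (h (snd z, angle_param (fst z))))"
      by (intro continuous_intros continuous_on_subset[OF cont_half]) auto
    show "continuous_on {z \<in> D. 0 \<le> sin (fst z)} (\<lambda>z. h (snd z, angle_param (fst z)))"
      by (intro continuous_on_subset[OF cont_half]) auto
    show "continuous_on D (\<lambda>z. sin (fst z))" by (intro continuous_intros)
    fix z assume "z \<in> D" "sin (fst z) = 0"
    then show "Tmap (h (snd z, angle_param (fst z))) = h (snd z, angle_param (fst z))"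
      using angle_param_sin_eq_0[of "fst z"] h(5)[of "snd z"]
      by (auto simp: D_def mem_Times_iff Tmap_fixed_ends_def)
  qed
  then have cont: "continuous_on D (\<lambda>z. pcov (F z))"
    by (rule continuous_on_compose2[OF continuous_on_pcov]) (use F_in in auto)
  have "symmetric_homotopy (\<lambda>z. pcov (F z))"
    unfolding symmetric_homotopy_def symmetric_loop_def
  proof (intro conjI ballI allI)
    show "continuous_on (UNIV \<times> {0..1}) (\<lambda>z. pcov (F z))" using cont by (simp add: D_def)
    fix t k :: real assume t: "t \<in> {0..1}"
    have kt: "(k, t) \<in> D" using t by (simp add: D_def)
    show "continuous_on UNIV (\<lambda>k. pcov (F (k, t)))"
      by (rule continuous_on_compose2[OF cont]) (use t in \<open>auto intro: continuous_intros simp: D_def\<close>)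
    show "pcov (F (k, t)) \<in> SO4" by (rule pcov_in_SO4[OF F_in[OF kt]])
    show "pcov (F (k + 2 * pi, t)) = pcov (F (k, t))" by (simp add: F_def sym_extension_periodic)
    have "F (- k, t) = Tmap (F (k, t))" using h(5)[OF t] by (simp add: F_def sym_extension_minus)
    then show "wmat ** pcov (F (k, t)) ** matrix_inv wmat = matrix_inv (pcov (F (- k, t)))"
      by (simp add: wmat_conj_pcov F_in[OF kt])
  qed
  then show ?thesis unfolding symmetrically_homotopic_def
    by (intro exI[of _ "\<lambda>z. pcov (F z)"]) (simp add: F_def h(3,4))
qed

section \<open>Symmetric null-homotopy and the endpoint \<open>L \<pi>\<close>\<close>

lemma symmetrically_homotopic_const_if_X0:
  assumes W: "symmetric_loop W" and L: "is_lift L W" and per: "\<And>k. L (k + 2 * pi) = L k"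
    and X0: "L 0 \<in> X0" "L pi \<in> X0"
  shows "symmetrically_homotopic W (\<lambda>k. mat 1)"
proof -
  have fixed_X0: "Tmap a = a" if "a \<in> X0" for a
    using that X0_subset_Sp1xSp1 Tmap_fixed_iff by blast
  define \<gamma> where "\<gamma> = (\<lambda>s. L (pi * s))"
  have W_eq: "W = (\<lambda>k. pcov (sym_extension \<gamma> k))"
  proof
    fix k
    have "sym_extension \<gamma> k = L k"
      unfolding \<gamma>_def by (rule sym_extension_lift[OF W L fixed_X0[OF X0(1)] per])
    then show "W k = pcov (sym_extension \<gamma> k)" by (simp add: is_lift_pcov[OF L])
  qed
  have p\<gamma>: "path \<gamma>" "path_image \<gamma> \<subseteq> Sp1xSp1"
    using is_lift_in_Sp1xSp1[OF L] unfolding path_def path_image_def \<gamma>_def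
    by (auto intro!: continuous_on_compose2[OF is_lift_continuous[OF L]] continuous_intros)
  obtain \<sigma> where \<sigma>: "path \<sigma>" "path_image \<sigma> \<subseteq> X0" "pathstart \<sigma> = L 0" "pathfinish \<sigma> = L pi"
    using path_connected_X0 X0 unfolding path_connected_def by blast
  have "homotopic_paths Sp1xSp1 \<gamma> \<sigma>"
  proof -
    have "pathstart \<sigma> = pathstart \<gamma>" "pathfinish \<sigma> = pathfinish \<gamma>"
      using \<sigma>(3,4) by (simp_all add: pathstart_def pathfinish_def \<gamma>_def)
    moreover have "path_image \<sigma> \<subseteq> Sp1xSp1" using \<sigma>(2) X0_subset_Sp1xSp1 by blast
    ultimately show ?thesis
      using simply_connected_Sp1xSp1 p\<gamma> \<sigma>(1) unfolding simply_connected_eq_homotopic_paths by blast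
  qed
  then have "homotopic_with_canon Tmap_fixed_ends {0..1} Sp1xSp1 \<gamma> \<sigma>"
    unfolding homotopic_paths_def
  proof (rule homotopic_with_mono)
    fix h :: "real \<Rightarrow> (real^4) \<times> (real^4)"
    assume "pathstart h = pathstart \<gamma> \<and> pathfinish h = pathfinish \<gamma>"
    then have "h 0 = L 0" "h 1 = L pi" by (simp_all add: pathstart_def pathfinish_def \<gamma>_def)
    then show "Tmap_fixed_ends h" using X0 fixed_X0 by (simp add: Tmap_fixed_ends_def)
  qed
  moreover have "homotopic_with_canon Tmap_fixed_ends {0..1} Sp1xSp1 \<sigma> (\<lambda>s. (qone, qone))"
  proof (rule homotopic_with_subset_right[OF _ X0_subset_Sp1xSp1])
    have "homotopic_with_canon (\<lambda>h. True) {0..1} X0 \<sigma> (\<lambda>s. (qone, qone))"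
      using \<sigma>(1,2) qone_qone_in_X0 path_connected_X0
      by (intro homotopic_from_contractible convex_imp_contractible)
         (auto simp: path_def path_image_def)
    then show "homotopic_with_canon Tmap_fixed_ends {0..1} X0 \<sigma> (\<lambda>s. (qone, qone))"
    proof (rule homotopic_with_mono)
      fix h :: "real \<Rightarrow> (real^4) \<times> (real^4)"
      assume "continuous_map (top_of_set {0..1}) (top_of_set X0) h"
      then have "h 0 \<in> X0" "h 1 \<in> X0" by auto
      then show "Tmap_fixed_ends h" by (simp add: Tmap_fixed_ends_def fixed_X0)
    qed
  qed
  ultimately have "homotopic_with_canon Tmap_fixed_ends {0..1} Sp1xSp1 \<gamma> (\<lambda>s. (qone, qone))"
    by (rule homotopic_with_trans)
  then have "symmetrically_homotopic W (\<lambda>k. pcov (sym_extension (\<lambda>s. (qone, qone)) k))"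
    unfolding W_eq by (rule symmetrically_homotopic_sym_extension)
  then show ?thesis using fixed_X0[OF qone_qone_in_X0] by (simp add: pcov_qone)
qed

text \<open>Lifting a symmetric homotopy, uniqueness of lifts on the connected strip
  \<open>\<real> \<times> [0, 1]\<close> transports periodicity and \<open>T\<close>-symmetry from the bottom edge to the whole lift.\<close>
lemma lift_symmetric_homotopy:
  assumes H: "symmetric_homotopy H" and L: "is_lift L (\<lambda>k. H (k, 0))" "Tmap (L 0) = L 0"
    and per: "\<And>k. L (k + 2 * pi) = L k"
  obtains K where "continuous_on (UNIV \<times> {0..1}) K" "K \<in> UNIV \<times> {0..1} \<rightarrow> Sp1xSp1"
    "\<And>k. K (k, 0) = L k" "\<And>z. z \<in> UNIV \<times> {0..1} \<Longrightarrow> H z = pcov (K z)"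
    "\<And>k t. t \<in> {0..1} \<Longrightarrow> K (k + 2 * pi, t) = K (k, t)"
    "\<And>k t. t \<in> {0..1} \<Longrightarrow> Tmap (K (- k, t)) = K (k, t)"
proof -
  define D where "D = (UNIV :: real set) \<times> {0..1::real}"
  have D: "connected D" "(0, 0) \<in> D" "\<And>k t. (k, t) \<in> D \<longleftrightarrow> t \<in> {0..1}"
    by (auto simp: D_def intro: connected_Times)
  have loops: "\<And>t. t \<in> {0..1} \<Longrightarrow> symmetric_loop (\<lambda>k. H (k, t))"
    and cont_H: "continuous_on D H" using H by (simp_all add: symmetric_homotopy_def D_def)
  then have H_SO4: "z \<in> D \<Longrightarrow> H z \<in> SO4" for z by (cases z) (simp add: D symmetric_loop_def)
  obtain K where K: "continuous_on D K" "K \<in> D \<rightarrow> Sp1xSp1" "\<And>k. K (k, 0) = L k"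
      "\<And>z. z \<in> D \<Longrightarrow> H z = pcov (K z)"
  proof (rule covering_space_lift_homotopy_alt[OF covering_space_pcov, of UNIV H L])
    show "continuous_on (UNIV \<times> {0..1}) H" using cont_H by (simp add: D_def)
    show "H \<in> UNIV \<times> {0..1} \<rightarrow> SO4" using H_SO4 by (auto simp: D_def)
    show "H (k, 0) = pcov (L k)" for k using is_lift_pcov[OF L(1)] by simp
    show "continuous_on UNIV L" "L \<in> UNIV \<rightarrow> Sp1xSp1"
      using is_lift_continuous[OF L(1)] is_lift_in_Sp1xSp1[OF L(1)] by auto
  qed (auto simp: D_def)
  have K_in: "K (k, t) \<in> Sp1xSp1" if "t \<in> {0..1}" for k t using K(2) that D(3) by blast
  have K_cont: "continuous_on D (\<lambda>z. K (f (fst z), snd z))" if "continuous_on UNIV f" for f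
    by (rule continuous_on_compose2[OF K(1)]) (auto intro!: continuous_intros
        continuous_on_compose2[OF that] simp: D)
  have "K (k + 2 * pi, t) = K (k, t)" if "t \<in> {0..1}" for k t
  proof (rule pcov_lift_eqI[OF D(1,2), of "(k, t)" "\<lambda>z. K (fst z + 2 * pi, snd z)", simplified])
    show "\<And>y. y \<in> D \<Longrightarrow> pcov (K (fst y + 2 * pi, snd y)) = pcov (K y)"
      using loops K(4) by (force simp: D symmetric_loop_def)
    show "continuous_on D (\<lambda>z. K (fst z + 2 * pi, snd z))"
      by (rule K_cont) (intro continuous_intros)
    show "K (2 * pi, 0) = K (0, 0)" using per[of 0] by (simp add: K(3))
  qed (use that K K_in in \<open>auto simp: D\<close>)
  moreover have "Tmap (K (- k, t)) = K (k, t)" if "t \<in> {0..1}" for k t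
  proof (rule pcov_lift_eqI[OF D(1,2), of "(k, t)" "\<lambda>z. Tmap (K (- fst z, snd z))", simplified])
    show "pcov (Tmap (K (- fst y, snd y))) = pcov (K y)" if yD: "y \<in> D" for y
    proof -
      obtain a b where y: "y = (a, b)" and b: "b \<in> {0..1}" using yD by (cases y) (auto simp: D)
      have "pcov (Tmap (K (- a, b))) = H (a, b)"
        using pcov_Tmap_symmetric_loop[OF loops[OF b] K_in[OF b]] K(4) b by (simp add: D)
      then show ?thesis using K(4) yD y by simp
    qed
    show "continuous_on D (\<lambda>z. Tmap (K (- fst z, snd z)))"
      by (intro continuous_intros K_cont[of uminus, simplified])
  qed (use that K K_in L(2) in \<open>auto simp: D Tmap_in_Sp1xSp1\<close>)
  ultimately show ?thesis using that K unfolding D_def by blast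
qed

text \<open>Along a symmetric homotopy the lifts at \<open>k = 0\<close> and \<open>k = \<pi>\<close> stay \<open>T\<close>-fixed, so their first
  components stay in \<open>{\<plusminus>1}\<close> and cannot change; at the constant end they agree.\<close>
lemma fst_lift_pi_if_symmetrically_homotopic:
  assumes W: "symmetric_loop W" and L: "is_lift L W" "Tmap (L 0) = L 0"
    and per: "\<And>k. L (k + 2 * pi) = L k" and hom: "symmetrically_homotopic W (\<lambda>k. mat 1)"
  shows "fst (L pi) $ 1 = fst (L 0) $ 1"
proof -
  obtain H where H: "symmetric_homotopy H" "\<And>k. H (k, 0) = W k" "\<And>k. H (k, 1) = mat 1"
    using hom by (auto simp: symmetrically_homotopic_def)
  have "is_lift L (\<lambda>k. H (k, 0))" using L(1) by (simp add: H(2))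
  then obtain K where K: "continuous_on (UNIV \<times> {0..1}) K" "K \<in> UNIV \<times> {0..1} \<rightarrow> Sp1xSp1"
      "\<And>k. K (k, 0) = L k" "\<And>z. z \<in> UNIV \<times> {0..1} \<Longrightarrow> H z = pcov (K z)"
      "\<And>k t. t \<in> {0..1} \<Longrightarrow> K (k + 2 * pi, t) = K (k, t)"
      "\<And>k t. t \<in> {0..1} \<Longrightarrow> Tmap (K (- k, t)) = K (k, t)"
    using lift_symmetric_homotopy[OF H(1) _ L(2) per] by blast
  have K_in: "K (k, t) \<in> Sp1xSp1" if "t \<in> {0..1}" for k t using K(2) that by blast
  have ends_fixed: "K (k, t) \<in> X0 \<union> Y0" if "k = 0 \<or> k = pi" "t \<in> {0..1}" for k t
    using that K(5,6)[of t "- pi"] K(6)[of t 0] K_in Tmap_fixed_iff by auto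
  have sign_const: "fst (K (k, 1)) $ 1 = fst (K (k, 0)) $ 1" if "k = 0 \<or> k = pi" for k
  proof -
    have "(\<lambda>t. fst (K (k, t)) $ 1) constant_on {0..1}"
    proof (rule continuous_finite_range_constant)
      show "continuous_on {0..1} (\<lambda>t. fst (K (k, t)) $ 1)"
        by (intro continuous_intros continuous_on_compose2[OF K(1)]) auto
      have "(\<lambda>t. fst (K (k, t)) $ 1) ` {0..1} \<subseteq> {1, -1}"
        using ends_fixed[OF that] fst_X0 fst_Y0 by blast
      then show "finite ((\<lambda>t. fst (K (k, t)) $ 1) ` {0..1})" by (rule finite_subset) simp
    qed simp
    then show ?thesis by (auto simp: constant_on_def)
  qed
  have "K (pi, 1) = K (0, 1)"
    using K(1,4) H(3) K_in
    by (intro pcov_lift_eqI[of UNIV 0 pi "\<lambda>k. K (k, 1)" "\<lambda>k. K (0, 1)"])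
       (auto intro!: continuous_on_compose2[OF K(1)] continuous_intros)
  then show ?thesis using sign_const K(3) by metis
qed

theorem theorem2:
  fixes W :: "real \<Rightarrow> real^4^4"
  assumes "symmetric_loop W"
    and "nullhomotopic_SO4 W"
    and "\<exists>L. is_lift L W \<and> Tmap (L 0) = L 0"
  shows "(\<exists>L. is_lift L W \<and> L 0 \<in> X0)
    \<and> (\<forall>L. is_lift L W \<and> L 0 \<in> X0 \<longrightarrow>
          L pi \<in> X0 \<union> Y0
        \<and> (symmetrically_homotopic W (\<lambda>k. mat 1) \<longleftrightarrow> L pi \<in> X0)
        \<and> (L pi \<in> Y0 \<longrightarrow> \<not> symmetrically_homotopic W (\<lambda>k. mat 1)))"
proof (intro conjI allI impI; (elim conjE)?)
  note W = assms(1)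
  note per = is_lift_periodic[OF W assms(2)]
  have X0_Y0: "a \<notin> Y0" if "a \<in> X0" for a using that fst_X0 fst_Y0 by fastforce
  obtain L0 where L0: "is_lift L0 W" "Tmap (L0 0) = L0 0" using assms(3) by blast
  then have "L0 0 \<in> X0 \<union> Y0" using Tmap_fixed_iff is_lift_in_Sp1xSp1 by blast
  then show "\<exists>L. is_lift L W \<and> L 0 \<in> X0"
    using L0(1) is_lift_uminus[OF L0(1)] by (auto simp: X0_iff Y0_iff)
  fix L assume L: "is_lift L W" "L 0 \<in> X0"
  have T0: "Tmap (L 0) = L 0" using L Tmap_fixed_iff X0_subset_Sp1xSp1 by blast
  have "Tmap (L pi) = L pi"
    using is_lift_symmetric[OF W L(1) T0, of pi] per[OF L(1), of "- pi"] by simp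
  then show XY: "L pi \<in> X0 \<union> Y0" using Tmap_fixed_iff is_lift_in_Sp1xSp1[OF L(1)] by blast
  show iff: "symmetrically_homotopic W (\<lambda>k. mat 1) \<longleftrightarrow> L pi \<in> X0"
    using fst_lift_pi_if_symmetrically_homotopic[OF W L(1) T0 per[OF L(1)]]
      symmetrically_homotopic_const_if_X0[OF W L(1) per[OF L(1)] L(2)] XY fst_X0 fst_Y0 L(2)
    by fastforce
  show "L pi \<in> Y0 \<Longrightarrow> \<not> symmetrically_homotopic W (\<lambda>k. mat 1)" using iff X0_Y0 by blast
qed

end
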